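(* Assume $V=W$, that $\mathcal{A}$ is coercive with constant $\alpha>0$ (i.e. $\alpha\|\phi\|_W^2\le\mathcal{A}(\phi,\phi)$ for all $\phi\in W$), and that $W_\theta\cup S_\theta\subseteq V_\eta$. Let $(\tilde w^n_\theta)\subset W_\theta$ be a minimizing sequence, i.e. $\lim_n\|u-\tilde w^n_\theta\|_{op,\eta}=\inf_{w_\theta\in W_\theta}\|u-w_\theta\|_{op,\eta}$, which converges weakly in $W$ to $u^*_\theta\in\mathrm{cl}^{seq}_w(W_\theta)$. Then $$\|u-u^*_\theta\|_W\le\Big(1+\frac{2M}{\alpha}\Big)\inf_{w_\theta\in W_\theta}\|u-w_\theta\|_W.$$
   Context: $W$ and $V$ are reflexive separable real Banach spaces (here $V=W$, a Hilbert space with scalar product $(\cdot,\cdot)_W$). $\mathcal{A}:W\times V\to\mathbb{R}$ is a bilinear form with $\mathcal{A}(w,v)\le M\|w\|_W\|v\|_V$ for all $w,v$, $\mathcal{F}:V\to\mathbb{R}$ is bounded linear, and $u\in W$ is the unique solution of $\mathcal{A}(u,v)=\mathcal{F}(v)$ for all $v\in V$. $W_\theta\subseteq W$ and $V_\eta\subseteq V$ are arbitrary subsets, $V_\eta$ containing an element of nonzero norm. For $w\in W$, $\|w\|_{op,\eta}:=\sup_{v_\eta\in V_\eta,\ \|v_\eta\|_V\neq0}\mathcal{A}(w,v_\eta)/\|v_\eta\|_V$. $S_\theta:=\{w_1-w_2:\ w_1,w_2\in W_\theta\}$. $\mathrm{cl}^{seq}_w(W_\theta)$ is the set of all weak limits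 in $W$ of sequences in $W_\theta$. *)

theory Defs
  imports "HOL-Analysis.Analysis"
begin

definition weak_conv :: "(nat \<Rightarrow> 'a::real_normed_vector) \<Rightarrow> 'a \<Rightarrow> bool" where
  "weak_conv x y \<longleftrightarrow> (\<forall>f::'a \<Rightarrow> real. bounded_linear f \<longrightarrow> (\<lambda>n. f (x n)) \<longlonglongrightarrow> f y)"

definition seq_weak_closure :: "'a::real_normed_vector set \<Rightarrow> 'a set" where
  "seq_weak_closure S = {y. \<exists>x. (\<forall>n. x n \<in> S) \<and> weak_conv x y}"

definition op_norm_eta :: "('a::real_normed_vector \<Rightarrow> 'b::real_normed_vector \<Rightarrow> real) \<Rightarrow> 'b set \<Rightarrow> 'a \<Rightarrow> real" where
  "op_norm_eta A Veta w = (SUP v \<in> {v \<in> Veta. norm v \<noteq> 0}. A w v / norm v)"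

definition diff_set :: "'a::ab_group_add set \<Rightarrow> 'a set" where
  "diff_set S = {w1 - w2 | w1 w2. w1 \<in> S \<and> w2 \<in> S}"

end

theory Submission
  imports Defs
begin

text \<open>For \<open>w \<in> W\<^sub>\<theta>\<close>, coercivity tested with \<open>d = w - w\<^sub>n \<in> V\<^sub>\<eta>\<close> gives
  \<open>\<alpha>\<parallel>d\<parallel>\<^sup>2 \<le> \<A>(w - u, d) + \<A>(u - w\<^sub>n, d) \<le> (M\<parallel>u - w\<parallel> + \<parallel>u - w\<^sub>n\<parallel>\<^sub>o\<^sub>p) \<parallel>d\<parallel>\<close>.
  Since the norm is weakly lower semicontinuous and the sequence is minimizing,
  \<open>\<alpha>\<parallel>w - u\<^sup>*\<parallel> \<le> M\<parallel>u - w\<parallel> + inf\<^sub>v \<parallel>u - v\<parallel>\<^sub>o\<^sub>p \<le> 2M\<parallel>u - w\<parallel>\<close>; the triangle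
  inequality through \<open>w\<close> finishes the proof.\<close>

lemma op_norm_eta_upper:
  fixes A :: "'a::real_normed_vector \<Rightarrow> 'b::real_normed_vector \<Rightarrow> real"
  assumes bound: "\<forall>w v. A w v \<le> M * norm w * norm v"
    and "v \<in> V" "norm v \<noteq> 0"
  shows "A x v / norm v \<le> op_norm_eta A V x"
  unfolding op_norm_eta_def
proof (rule cSUP_upper)
  show "v \<in> {v \<in> V. norm v \<noteq> 0}" using assms by auto
  show "bdd_above ((\<lambda>v. A x v / norm v) ` {v \<in> V. norm v \<noteq> 0})"
  proof (rule bdd_aboveI2)
    fix y assume "y \<in> {v \<in> V. norm v \<noteq> 0}"
    then show "A x y / norm y \<le> M * norm x"
      using bound by (auto simp: divide_le_eq)
  qed
qed

lemma op_norm_eta_le: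
  fixes A :: "'a::real_normed_vector \<Rightarrow> 'b::real_normed_vector \<Rightarrow> real"
  assumes bound: "\<forall>w v. A w v \<le> M * norm w * norm v"
    and "\<exists>v \<in> V. norm v \<noteq> 0"
  shows "op_norm_eta A V x \<le> M * norm x"
  unfolding op_norm_eta_def
proof (rule cSUP_least)
  show "{v \<in> V. norm v \<noteq> 0} \<noteq> {}" using assms by auto
  fix y assume "y \<in> {v \<in> V. norm v \<noteq> 0}"
  then show "A x y / norm y \<le> M * norm x"
    using bound by (auto simp: divide_le_eq)
qed

lemma op_norm_eta_ge:
  fixes A :: "'a::real_normed_vector \<Rightarrow> 'b::real_normed_vector \<Rightarrow> real"
  assumes bil: "bilinear A"
    and bound: "\<forall>w v. A w v \<le> M * norm w * norm v"
    and "\<exists>v \<in> V. norm v \<noteq> 0"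
  shows "- M * norm x \<le> op_norm_eta A V x"
proof -
  obtain v where v: "v \<in> V" "norm v \<noteq> 0" using assms by auto
  have "- A x v \<le> M * norm x * norm v"
    using bound[rule_format, of "- x" v] bilinear_lneg[OF bil] by simp
  then have "- M * norm x \<le> A x v / norm v"
    using v(2) by (simp add: pos_le_divide_eq)
  also have "\<dots> \<le> op_norm_eta A V x"
    using op_norm_eta_upper[OF bound v] .
  finally show ?thesis .
qed

lemma op_norm_eta_nonneg:
  fixes A :: "'a::real_normed_vector \<Rightarrow> 'b::real_normed_vector \<Rightarrow> real"
  assumes bil: "bilinear A"
    and bound: "\<forall>w v. A w v \<le> M * norm w * norm v"
    and "v \<in> V" "- v \<in> V" "v \<noteq> 0"
  shows "0 \<le> op_norm_eta A V x"
proof -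
  have "A x v / norm v \<le> op_norm_eta A V x"
    using op_norm_eta_upper[OF bound] assms by simp
  moreover have "- (A x v / norm v) \<le> op_norm_eta A V x"
    using op_norm_eta_upper[OF bound, of "- v" V x] assms bilinear_rneg[OF bil] by simp
  ultimately show ?thesis by linarith
qed

lemma bdd_below_op_norm_eta_image:
  fixes A :: "'a::real_normed_vector \<Rightarrow> 'a \<Rightarrow> real"
  assumes bil: "bilinear A"
    and bound: "\<forall>w v. A w v \<le> M * norm w * norm v"
    and diff: "diff_set W \<subseteq> V"
  shows "bdd_below ((\<lambda>w. op_norm_eta A V (u - w)) ` W)"
proof (cases "\<exists>w1 \<in> W. \<exists>w2 \<in> W. w1 \<noteq> w2")
  case True
  then obtain w1 w2 where w: "w1 \<in> W" "w2 \<in> W" "w1 \<noteq> w2" by blast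
  then have "w1 - w2 \<in> V" "- (w1 - w2) \<in> V"
    using diff unfolding diff_set_def by auto
  then have "0 \<le> op_norm_eta A V x" for x
    using op_norm_eta_nonneg[OF bil bound] w(3) by simp
  then show ?thesis by (intro bdd_belowI[of _ 0]) auto
next
  case False
  then have "finite W" by (metis finite_subset finite.intros insertI1 subsetI singletonI)
  then show ?thesis by simp
qed

lemma norm_diff_le_op_norm_eta:
  fixes A :: "'a::real_normed_vector \<Rightarrow> 'a \<Rightarrow> real"
  assumes bil: "bilinear A"
    and bound: "\<forall>w v. A w v \<le> M * norm w * norm v"
    and coercive: "\<forall>\<phi>. \<alpha> * (norm \<phi>)\<^sup>2 \<le> A \<phi> \<phi>"
    and V_nz: "\<exists>v \<in> V. norm v \<noteq> 0"
    and dV: "w - w' \<in> V"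
  shows "\<alpha> * norm (w - w') \<le> M * norm (u - w) + op_norm_eta A V (u - w')"
proof (cases "w = w'")
  case True
  then show ?thesis using op_norm_eta_ge[OF bil bound V_nz, of "u - w'"] by simp
next
  case False
  define d where "d = w - w'"
  have d_pos: "norm d > 0" using False by (simp add: d_def)
  have "\<alpha> * (norm d)\<^sup>2 \<le> A d d" using coercive by auto
  also have "A d d = A (w - u) d + A (u - w') d"
    unfolding d_def by (simp add: bilinear_lsub[OF bil] bilinear_ladd[OF bil])
  also have "A (w - u) d \<le> M * norm (u - w) * norm d"
    using bound[rule_format, of "w - u" d] by (simp add: norm_minus_commute)
  also have "A (u - w') d \<le> op_norm_eta A V (u - w') * norm d"
    using op_norm_eta_upper[OF bound, of d V "u - w'"] dV d_pos
    by (simp add: d_def divide_le_eq)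
  finally have "\<alpha> * norm d * norm d \<le> (M * norm (u - w) + op_norm_eta A V (u - w')) * norm d"
    by (simp add: power2_eq_square algebra_simps)
  then show ?thesis using d_pos by (simp add: d_def)
qed

lemma weak_conv_diff_left:
  assumes "weak_conv x y"
  shows "weak_conv (\<lambda>n. z - x n) (z - y)"
  unfolding weak_conv_def
proof (intro allI impI)
  fix f :: "'a \<Rightarrow> real" assume f: "bounded_linear f"
  then have "(\<lambda>n. f z - f (x n)) \<longlonglongrightarrow> f z - f y"
    using assms unfolding weak_conv_def by (intro tendsto_diff) auto
  then show "(\<lambda>n. f (z - x n)) \<longlonglongrightarrow> f (z - y)"
    using f by (simp add: linear_diff bounded_linear.linear)
qed

lemma weak_conv_norm_le:
  fixes x :: "nat \<Rightarrow> 'a::real_inner"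
  assumes weak: "weak_conv x y"
    and b: "b \<longlonglongrightarrow> B"
    and le: "\<forall>n. norm (x n) \<le> b n"
  shows "norm y \<le> B"
proof -
  have B_nonneg: "0 \<le> B"
    by (rule LIMSEQ_le_const[OF b]) (meson le norm_ge_zero order_trans)
  have "(\<lambda>n. inner y (x n)) \<longlonglongrightarrow> inner y y"
    using weak bounded_linear_inner_right unfolding weak_conv_def by blast
  moreover have "(\<lambda>n. norm y * b n) \<longlonglongrightarrow> norm y * B"
    using b by (rule tendsto_mult_left)
  moreover have "inner y (x n) \<le> norm y * b n" for n
    using norm_cauchy_schwarz[of y "x n"] mult_left_mono[OF le[rule_format, of n]]
    by (meson norm_ge_zero order_trans)
  ultimately have "norm y * norm y \<le> norm y * B"
    by (simp add: LIMSEQ_le dot_square_norm power2_eq_square)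
  then show ?thesis
    using B_nonneg by (cases "norm y = 0") (auto simp: mult_le_cancel_left_pos)
qed

lemma coercivity_const_le_bound:
  fixes A :: "'a::real_normed_vector \<Rightarrow> 'a \<Rightarrow> real" and x :: 'a
  assumes bound: "\<forall>w v. A w v \<le> M * norm w * norm v"
    and coercive: "\<forall>\<phi>. \<alpha> * (norm \<phi>)\<^sup>2 \<le> A \<phi> \<phi>"
    and "x \<noteq> 0"
  shows "\<alpha> \<le> M"
proof -
  have "\<alpha> * (norm x)\<^sup>2 \<le> M * (norm x)\<^sup>2"
    using coercive[rule_format, of x] bound[rule_format, of x x] by (simp add: power2_eq_square)
  then show ?thesis using \<open>x \<noteq> 0\<close> by simp
qed

lemma weak_limit_dist_le:
  fixes A :: "'a::real_inner \<Rightarrow> 'a \<Rightarrow> real"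
  assumes bil: "bilinear A"
    and bound: "\<forall>w v. A w v \<le> M * norm w * norm v"
    and coercive: "\<forall>\<phi>. \<alpha> * (norm \<phi>)\<^sup>2 \<le> A \<phi> \<phi>"
    and alpha_pos: "\<alpha> > 0"
    and V_nz: "\<exists>v \<in> V. norm v \<noteq> 0"
    and diff: "diff_set W \<subseteq> V"
    and wt_in: "\<forall>n. wt n \<in> W"
    and lim: "(\<lambda>n. op_norm_eta A V (u - wt n)) \<longlonglongrightarrow> L"
    and weak: "weak_conv wt ustar"
    and w: "w \<in> W"
  shows "\<alpha> * norm (w - ustar) \<le> M * norm (u - w) + L"
proof -
  have "w - wt n \<in> V" for n
    using diff w wt_in unfolding diff_set_def by blast
  then have "norm (w - wt n) \<le> (M * norm (u - w) + op_norm_eta A V (u - wt n)) / \<alpha>" for n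
    using norm_diff_le_op_norm_eta[OF bil bound coercive V_nz] alpha_pos
    by (simp add: le_divide_eq mult.commute)
  moreover have "(\<lambda>n. (M * norm (u - w) + op_norm_eta A V (u - wt n)) / \<alpha>)
      \<longlonglongrightarrow> (M * norm (u - w) + L) / \<alpha>"
    by (intro tendsto_intros lim) (use alpha_pos in auto)
  ultimately have "norm (w - ustar) \<le> (M * norm (u - w) + L) / \<alpha>"
    using weak_conv_norm_le[OF weak_conv_diff_left[OF weak]] by blast
  then show ?thesis using alpha_pos by (simp add: le_divide_eq mult.commute)
qed

theorem lemma2:
  fixes A :: "'a::{real_inner, complete_space} \<Rightarrow> 'a \<Rightarrow> real"
    and F :: "'a \<Rightarrow> real"
    and u ustar :: 'a
    and Wtheta Veta :: "'a set"
    and wt :: "nat \<Rightarrow> 'a"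
    and M \<alpha> :: real
  assumes separable: "\<exists>D. countable D \<and> closure D = (UNIV :: 'a set)"
    and bil: "bilinear A"
    and bound: "\<forall>w v. A w v \<le> M * norm w * norm v"
    and F_lin: "bounded_linear F"
    and sol: "\<forall>v. A u v = F v"
    and sol_unique: "\<forall>w. (\<forall>v. A w v = F v) \<longrightarrow> w = u"
    and Veta_nz: "\<exists>v \<in> Veta. norm v \<noteq> 0"
    and alpha_pos: "\<alpha> > 0"
    and coercive: "\<forall>\<phi>. \<alpha> * (norm \<phi>)\<^sup>2 \<le> A \<phi> \<phi>"
    and incl: "Wtheta \<union> diff_set Wtheta \<subseteq> Veta"
    and wt_in: "\<forall>n. wt n \<in> Wtheta"
    and minimizing: "(\<lambda>n. op_norm_eta A Veta (u - wt n)) \<longlonglongrightarrow>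
                       (INF w \<in> Wtheta. op_norm_eta A Veta (u - w))"
    and weak: "weak_conv wt ustar"
    and ustar_in: "ustar \<in> seq_weak_closure Wtheta"
  shows "norm (u - ustar) \<le> (1 + 2 * M / \<alpha>) * (INF w \<in> Wtheta. norm (u - w))"
proof -
  let ?L = "INF w \<in> Wtheta. op_norm_eta A Veta (u - w)"
  obtain v where "v \<in> Veta" "v \<noteq> 0" using Veta_nz by auto
  then have "\<alpha> \<le> M" using coercivity_const_le_bound[OF bound coercive] by blast
  then have c_pos: "0 < 1 + 2 * M / \<alpha>"
    using alpha_pos by (simp add: add_pos_nonneg)
  have "norm (u - ustar) \<le> (1 + 2 * M / \<alpha>) * norm (u - w)" if w: "w \<in> Wtheta" for w
  proof -
    have "?L \<le> op_norm_eta A Veta (u - w)"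
      using bdd_below_op_norm_eta_image[OF bil bound] incl w by (intro cINF_lower) auto
    also have "\<dots> \<le> M * norm (u - w)" by (rule op_norm_eta_le[OF bound Veta_nz])
    finally have "\<alpha> * norm (w - ustar) \<le> 2 * M * norm (u - w)"
      using weak_limit_dist_le[OF bil bound coercive alpha_pos Veta_nz _ wt_in minimizing weak w]
        incl by auto
    then have "norm (w - ustar) \<le> 2 * M / \<alpha> * norm (u - w)"
      using alpha_pos by (simp add: le_divide_eq mult.commute)
    then show ?thesis
      using norm_triangle_ineq[of "u - w" "w - ustar"] by (simp add: algebra_simps)
  qed
  then have "norm (u - ustar) / (1 + 2 * M / \<alpha>) \<le> (INF w \<in> Wtheta. norm (u - w))"
    using wt_in c_pos by (intro cINF_greatest) (auto simp: divide_le_eq mult.commute)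
  then show ?thesis
    using c_pos by (simp add: divide_le_eq mult.commute)
qed

end
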